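(* $\gamma^{L-LD}(\mathcal{S})=\frac15$ and $\gamma^{L-LD}(\mathcal{H})=\frac14$; that is, every local locating-dominating code in the square grid has density at least $1/5$ and some such code has density exactly $1/5$, and every local locating-dominating code in the hexagonal grid has density at least $1/4$ and some such code has density exactly $1/4$.
   Context: The square grid $\mathcal{S}$ has vertex set $\mathbb{Z}^2$, with $\mathbf{u},\mathbf{v}$ adjacent iff $\mathbf{u}-\mathbf{v}\in\{(\pm1,0),(0,\pm1)\}$. The hexagonal grid $\mathcal{H}$ has vertex set $\mathbb{Z}^2$, with $\mathbf{u}=(i,j)$ and $\mathbf{v}$ adjacent iff $\mathbf{u}-\mathbf{v}\in\{(\pm1,0),(0,(-1)^{i+j+1})\}$. For a nonempty $C\subseteq\mathbb{Z}^2$ and vertex $\mathbf{u}$, $I(\mathbf{u})=N[\mathbf{u}]\cap C$ where $N[\mathbf{u}]$ is the closed neighbourhood. $C$ is a covering code if $I(\mathbf{u})\ne\emptyset$ for all $\mathbf{u}$; a local locating-dominating code if it is covering and $I(\mathbf{u})\ne I(\mathbf{v})$ for all adjacent $\mathbf{u},\mathbf{v}\notin C$. The density of $C$ is $D(C)=\limsup_{n\to\infty}|C\cap Q_n|/|Q_n|$ with $Q_n=\{(i,j)\in\mathbb{Z}^2:|i|\le n,|j|\le n\}$. $\gamma^{L-LD}(G)$ denotes the smallest density of a local locating-dominating code in $G$. *)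

theory Defs
  imports "HOL-Analysis.Analysis" "HOL-Library.Liminf_Limsup"
begin

type_synonym vertex = "int \<times> int"

definition sq_adj :: "vertex \<Rightarrow> vertex \<Rightarrow> bool" where
  "sq_adj u v \<longleftrightarrow> (fst u - fst v, snd u - snd v) \<in> {(1,0), (-1,0), (0,1), (0,-1)}"

definition hex_adj :: "vertex \<Rightarrow> vertex \<Rightarrow> bool" where
  "hex_adj u v \<longleftrightarrow> (fst u - fst v, snd u - snd v) \<in>
     {(1,0), (-1,0), (0, if even (fst u + snd u + 1) then 1 else -1)}"

definition closed_nbhd :: "(vertex \<Rightarrow> vertex \<Rightarrow> bool) \<Rightarrow> vertex \<Rightarrow> vertex set" where
  "closed_nbhd adj u = {v. v = u \<or> adj u v}"

definition I_set :: "(vertex \<Rightarrow> vertex \<Rightarrow> bool) \<Rightarrow> vertex set \<Rightarrow> vertex \<Rightarrow> vertex set" where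
  "I_set adj C u = closed_nbhd adj u \<inter> C"

definition covering_code :: "(vertex \<Rightarrow> vertex \<Rightarrow> bool) \<Rightarrow> vertex set \<Rightarrow> bool" where
  "covering_code adj C \<longleftrightarrow> C \<noteq> {} \<and> (\<forall>u. I_set adj C u \<noteq> {})"

definition local_LD_code :: "(vertex \<Rightarrow> vertex \<Rightarrow> bool) \<Rightarrow> vertex set \<Rightarrow> bool" where
  "local_LD_code adj C \<longleftrightarrow> covering_code adj C \<and>
     (\<forall>u v. adj u v \<and> u \<notin> C \<and> v \<notin> C \<longrightarrow> I_set adj C u \<noteq> I_set adj C v)"

definition Q :: "nat \<Rightarrow> vertex set" where
  "Q n = {(i,j). \<bar>i\<bar> \<le> int n \<and> \<bar>j\<bar> \<le> int n}"

definition density :: "vertex set \<Rightarrow> ereal" where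
  "density C = limsup (\<lambda>n. ereal (real (card (C \<inter> Q n)) / real (card (Q n))))"

definition gamma_LLD :: "(vertex \<Rightarrow> vertex \<Rightarrow> bool) \<Rightarrow> ereal" where
  "gamma_LLD adj = Inf {density C | C. local_LD_code adj C}"

end

theory Submission
  imports Defs "HOL-Real_Asymp.Real_Asymp"
begin

text \<open>
  A local locating-dominating code is in particular a covering code. If every closed
  neighbourhood has \<open>k\<close> vertices, the \<open>k\<close>-element neighbourhoods of the codewords in
  \<open>Q (n + 1)\<close> cover \<open>Q n\<close>, so every covering code has density at least \<open>1/k\<close>; a perfect code
  (neighbourhoods of codewords pairwise disjoint) attains \<open>1/k\<close>. Both grids are bipartite,
  hence triangle-free, and in a triangle-free graph two adjacent non-codewords cannot share a
  codeword neighbour, so every covering code is already locally locating-dominating. The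
  perfect codes are \<open>i + 2j \<equiv> 0\<close> modulo \<open>5\<close> in the square grid (\<open>k = 5\<close>) and modulo \<open>4\<close> in
  the hexagonal grid (\<open>k = 4\<close>).
\<close>

definition packing_code :: "(vertex \<Rightarrow> vertex \<Rightarrow> bool) \<Rightarrow> vertex set \<Rightarrow> bool" where
  "packing_code adj C \<longleftrightarrow> (\<forall>u. \<forall>c\<in>I_set adj C u. \<forall>c'\<in>I_set adj C u. c = c')"

definition residue_code :: "int \<Rightarrow> vertex set" where
  "residue_code m = {x. (fst x + 2 * snd x) mod m = 0}"

lemma Q_eq: "Q n = {-int n..int n} \<times> {-int n..int n}"
  unfolding Q_def by auto

lemma finite_Q: "finite (Q n)"
  by (simp add: Q_eq)

lemma real_card_Q: "real (card (Q n)) = (2 * real n + 1)^2"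
proof -
  have "card {-int n..int n} = 2 * n + 1" by simp
  then have "card (Q n) = (2 * n + 1)^2"
    by (simp add: Q_eq card_cartesian_product power2_eq_square)
  then show ?thesis by simp
qed

lemma gamma_LLD_eqI:
  assumes "\<And>C. local_LD_code adj C \<Longrightarrow> d \<le> density C"
    and "local_LD_code adj C\<^sub>0" and "density C\<^sub>0 = d"
  shows "gamma_LLD adj = d"
  unfolding gamma_LLD_def
proof (rule antisym)
  show "Inf {density C |C. local_LD_code adj C} \<le> d"
    using assms(2,3) by (intro Inf_lower2[of "density C\<^sub>0"]) auto
  show "d \<le> Inf {density C |C. local_LD_code adj C}"
    using assms(1) by (intro Inf_greatest) auto
qed

section \<open>Density of covering and perfect codes\<close>

locale regular_unit_nbhd =
  fixes adj :: "vertex \<Rightarrow> vertex \<Rightarrow> bool" and k :: nat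
  assumes adj_sym: "adj u v \<Longrightarrow> adj v u"
    and adj_unit: "adj u v \<Longrightarrow> \<bar>fst u - fst v\<bar> \<le> 1 \<and> \<bar>snd u - snd v\<bar> \<le> 1"
    and finite_closed_nbhd: "finite (closed_nbhd adj u)"
    and card_closed_nbhd: "card (closed_nbhd adj u) = k"
begin

lemma k_pos: "k > 0"
proof -
  have "0 \<in> closed_nbhd adj 0" by (simp add: closed_nbhd_def)
  then show ?thesis
    using card_closed_nbhd[of 0] finite_closed_nbhd[of 0] card_gt_0_iff by blast
qed

lemma mem_closed_nbhd_commute: "u \<in> closed_nbhd adj v \<longleftrightarrow> v \<in> closed_nbhd adj u"
  unfolding closed_nbhd_def using adj_sym by blast

lemma closed_nbhd_subset_Q_Suc:
  assumes "u \<in> Q n"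
  shows "closed_nbhd adj u \<subseteq> Q (Suc n)"
proof
  fix v assume "v \<in> closed_nbhd adj u"
  then have "v = u \<or> adj u v" by (simp add: closed_nbhd_def)
  then show "v \<in> Q (Suc n)"
    using assms adj_unit[of u v] by (cases u, cases v) (auto simp: Q_def)
qed

lemma card_Q_le_covering:
  assumes cov: "covering_code adj C"
  shows "card (Q n) \<le> k * card (C \<inter> Q (Suc n))"
proof -
  have fin: "finite (C \<inter> Q (Suc n))" using finite_Q by simp
  have "Q n \<subseteq> (\<Union>c\<in>C \<inter> Q (Suc n). closed_nbhd adj c)"
  proof
    fix u assume u: "u \<in> Q n"
    from cov obtain c where c: "c \<in> closed_nbhd adj u" "c \<in> C"
      unfolding covering_code_def I_set_def by blast
    then have "c \<in> Q (Suc n)" using closed_nbhd_subset_Q_Suc[OF u] by blast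
    then show "u \<in> (\<Union>c\<in>C \<inter> Q (Suc n). closed_nbhd adj c)"
      using c mem_closed_nbhd_commute by blast
  qed
  then have "card (Q n) \<le> card (\<Union>c\<in>C \<inter> Q (Suc n). closed_nbhd adj c)"
    using fin finite_closed_nbhd by (intro card_mono) auto
  also have "\<dots> \<le> (\<Sum>c\<in>C \<inter> Q (Suc n). card (closed_nbhd adj c))"
    by (rule card_UN_le[OF fin])
  also have "\<dots> = k * card (C \<inter> Q (Suc n))"
    by (simp add: card_closed_nbhd)
  finally show ?thesis .
qed

lemma packing_card_le_card_Q_Suc:
  assumes pack: "packing_code adj C"
  shows "k * card (C \<inter> Q n) \<le> card (Q (Suc n))"
proof -
  have fin: "finite (C \<inter> Q n)" using finite_Q by simp
  have disj: "closed_nbhd adj c \<inter> closed_nbhd adj c' = {}"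
    if "c \<in> C" "c' \<in> C" "c \<noteq> c'" for c c'
    using pack that mem_closed_nbhd_commute
    unfolding packing_code_def I_set_def by blast
  have "k * card (C \<inter> Q n) = (\<Sum>c\<in>C \<inter> Q n. card (closed_nbhd adj c))"
    by (simp add: card_closed_nbhd)
  also have "\<dots> = card (\<Union>c\<in>C \<inter> Q n. closed_nbhd adj c)"
    using fin finite_closed_nbhd disj by (intro card_UN_disjoint[symmetric]) auto
  also have "\<dots> \<le> card (Q (Suc n))"
    using closed_nbhd_subset_Q_Suc by (intro card_mono[OF finite_Q]) auto
  finally show ?thesis .
qed

lemma covering_ratio_lower_bound:
  assumes "covering_code adj C" and "n \<ge> 1"
  shows "(2 * real n - 1)^2 / (real k * (2 * real n + 1)^2)
    \<le> real (card (C \<inter> Q n)) / real (card (Q n))"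
proof -
  obtain m where m: "n = Suc m" using assms(2) by (cases n) auto
  have "real (card (Q m)) \<le> real k * real (card (C \<inter> Q n))"
    using card_Q_le_covering[OF assms(1), of m] m of_nat_mono by fastforce
  then have "(2 * real n - 1)^2 \<le> real k * real (card (C \<inter> Q n))"
    by (simp add: real_card_Q m algebra_simps)
  then show ?thesis
    using k_pos by (simp add: real_card_Q divide_simps mult.commute)
qed

lemma packing_ratio_upper_bound:
  assumes "packing_code adj C"
  shows "real (card (C \<inter> Q n)) / real (card (Q n))
    \<le> (2 * real n + 3)^2 / (real k * (2 * real n + 1)^2)"
proof -
  have "real k * real (card (C \<inter> Q n)) \<le> real (card (Q (Suc n)))"
    using packing_card_le_card_Q_Suc[OF assms, of n] of_nat_mono by fastforce
  then have "real k * real (card (C \<inter> Q n)) \<le> (2 * real n + 3)^2"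
    by (simp add: real_card_Q algebra_simps)
  then show ?thesis
    using k_pos by (simp add: real_card_Q divide_simps mult.commute)
qed

lemma tendsto_shifted_square_ratio:
  "(\<lambda>n. (2 * real n + a)^2 / (real k * (2 * real n + 1)^2)) \<longlonglongrightarrow> 1 / real k"
proof -
  have "(\<lambda>n. ((2 * real n + a) / (2 * real n + 1))^2) \<longlonglongrightarrow> 1"
    by real_asymp
  from tendsto_divide[OF this tendsto_const, of "real k"] k_pos show ?thesis
    by (simp add: power_divide mult.commute)
qed

lemma density_ge_covering:
  assumes "covering_code adj C"
  shows "ereal (1 / real k) \<le> density C"
proof -
  let ?g = "\<lambda>n. (2 * real n - 1)^2 / (real k * (2 * real n + 1)^2)"
  have "(\<lambda>n. ereal (?g n)) \<longlonglongrightarrow> ereal (1 / real k)"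
    using tendsto_shifted_square_ratio[of "-1"] by (intro tendsto_ereal) simp
  from lim_imp_Limsup[OF trivial_limit_sequentially this]
  have "ereal (1 / real k) = limsup (\<lambda>n. ereal (?g n))" by simp
  also have "\<dots> \<le> density C"
    unfolding density_def
    using covering_ratio_lower_bound[OF assms]
    by (intro Limsup_mono eventually_sequentiallyI[of 1]) simp
  finally show ?thesis .
qed

lemma density_perfect:
  assumes "covering_code adj C" and "packing_code adj C"
  shows "density C = ereal (1 / real k)"
proof -
  let ?f = "\<lambda>n. real (card (C \<inter> Q n)) / real (card (Q n))"
  have "?f \<longlonglongrightarrow> 1 / real k"
  proof (rule tendsto_sandwich[OF _ _ tendsto_shifted_square_ratio tendsto_shifted_square_ratio])
    show "\<forall>\<^sub>F n in sequentially. (2 * real n + - 1)^2 / (real k * (2 * real n + 1)^2) \<le> ?f n"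
      using covering_ratio_lower_bound[OF assms(1)]
      by (intro eventually_sequentiallyI[of 1]) simp
    show "\<forall>\<^sub>F n in sequentially. ?f n \<le> (2 * real n + 3)^2 / (real k * (2 * real n + 1)^2)"
      using packing_ratio_upper_bound[OF assms(2)] by simp
  qed
  then show ?thesis
    unfolding density_def by (intro lim_imp_Limsup tendsto_ereal) simp_all
qed

end

section \<open>Covering codes in triangle-free grids\<close>

lemma local_LD_code_if_covering_triangle_free:
  assumes triangle_free: "\<And>u v w. adj u v \<Longrightarrow> adj v w \<Longrightarrow> \<not> adj u w"
    and cov: "covering_code adj C"
  shows "local_LD_code adj C"
  unfolding local_LD_code_def
proof (intro conjI cov allI impI notI)
  fix u v
  assume uv: "adj u v \<and> u \<notin> C \<and> v \<notin> C" and eq: "I_set adj C u = I_set adj C v"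
  from cov obtain c where c: "c \<in> I_set adj C u"
    unfolding covering_code_def by (meson ex_in_conv)
  then have "c \<in> I_set adj C v"
    by (simp add: eq)
  with c uv have "adj u c" and "adj v c"
    by (auto simp: I_set_def closed_nbhd_def)
  with uv show False
    using triangle_free by blast
qed

lemma odd_sum_if_unit_step:
  fixes u v :: vertex
  assumes "\<bar>fst u - fst v\<bar> + \<bar>snd u - snd v\<bar> = 1"
  shows "odd (fst u + snd u + fst v + snd v)"
  using assms by (cases u, cases v) (simp; presburger)

lemma triangle_free_if_unit_steps:
  fixes adj :: "vertex \<Rightarrow> vertex \<Rightarrow> bool"
  assumes unit: "\<And>u v. adj u v \<Longrightarrow> \<bar>fst u - fst v\<bar> + \<bar>snd u - snd v\<bar> = 1"
    and "adj u v" "adj v w"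
  shows "\<not> adj u w"
proof
  have odd_sum: "odd (fst x + snd x + fst y + snd y)" if "adj x y" for x y
    using unit[OF that] by (rule odd_sum_if_unit_step)
  assume "adj u w"
  from odd_sum[OF assms(2)] odd_sum[OF assms(3)] odd_sum[OF this] show False
    by (auto simp: even_add)
qed

section \<open>Perfect codes from residue classes\<close>

lemma bij_betw_mod_if_diameter_lt:
  fixes \<phi> :: "'a \<Rightarrow> int"
  assumes inj: "inj_on \<phi> A" and diam: "\<And>x y. x \<in> A \<Longrightarrow> y \<in> A \<Longrightarrow> \<bar>\<phi> x - \<phi> y\<bar> < m"
    and card: "card A = nat m" and "m > 0"
  shows "bij_betw (\<lambda>x. \<phi> x mod m) A {0..<m}"
proof -
  have inj_mod: "inj_on (\<lambda>x. \<phi> x mod m) A"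
  proof (rule inj_onI)
    fix x y assume "x \<in> A" "y \<in> A" and "\<phi> x mod m = \<phi> y mod m"
    then have "m dvd \<phi> x - \<phi> y" and "\<bar>\<phi> x - \<phi> y\<bar> < m"
      using diam by (auto simp: mod_eq_dvd_iff)
    then have "\<phi> x = \<phi> y"
      using dvd_imp_le_int[of "\<phi> x - \<phi> y" m] \<open>m > 0\<close> by (cases "\<phi> x = \<phi> y") auto
    with inj \<open>x \<in> A\<close> \<open>y \<in> A\<close> show "x = y" by (auto dest: inj_onD)
  qed
  have "(\<lambda>x. \<phi> x mod m) ` A \<subseteq> {0..<m}"
    using \<open>m > 0\<close> by auto
  moreover have "card ((\<lambda>x. \<phi> x mod m) ` A) = card {0..<m}"
    using card_image[OF inj_mod] card by simp
  ultimately have "(\<lambda>x. \<phi> x mod m) ` A = {0..<m}"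
    by (intro card_subset_eq) auto
  with inj_mod show ?thesis
    by (simp add: bij_betw_def)
qed

lemma residue_class_perfect_code:
  fixes \<phi> :: "vertex \<Rightarrow> int"
  assumes bij: "\<And>u. bij_betw (\<lambda>x. \<phi> x mod m) (closed_nbhd adj u) {0..<m}" and "m > 0"
  shows "covering_code adj {x. \<phi> x mod m = 0}" and "packing_code adj {x. \<phi> x mod m = 0}"
proof -
  let ?C = "{x. \<phi> x mod m = 0}"
  have dominated: "I_set adj ?C u \<noteq> {}" for u
  proof -
    have "0 \<in> (\<lambda>x. \<phi> x mod m) ` closed_nbhd adj u"
      unfolding bij_betw_imp_surj_on[OF bij] using \<open>m > 0\<close> by simp
    then obtain c where "c \<in> closed_nbhd adj u" "\<phi> c mod m = 0"
      by (auto simp: image_iff)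
    then have "c \<in> I_set adj ?C u"
      by (simp add: I_set_def)
    then show ?thesis
      by (metis equals0D)
  qed
  moreover from dominated have "?C \<noteq> {}"
    by (metis I_set_def inf_bot_right)
  ultimately show "covering_code adj ?C"
    unfolding covering_code_def by blast
  show "packing_code adj ?C"
    unfolding packing_code_def I_set_def
  proof (intro allI ballI)
    fix u c c'
    assume "c \<in> closed_nbhd adj u \<inter> ?C" "c' \<in> closed_nbhd adj u \<inter> ?C"
    then show "c = c'"
      by (intro inj_onD[OF bij_betw_imp_inj_on[OF bij]]) auto
  qed
qed

section \<open>The square grid\<close>

lemma closed_nbhd_sq:
  "closed_nbhd sq_adj (a, b) = {(a, b), (a + 1, b), (a - 1, b), (a, b + 1), (a, b - 1)}"
  unfolding closed_nbhd_def sq_adj_def by (auto simp: algebra_simps)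

lemma sq_adj_unit_step: "sq_adj u v \<Longrightarrow> \<bar>fst u - fst v\<bar> + \<bar>snd u - snd v\<bar> = 1"
  unfolding sq_adj_def by auto

interpretation sq: regular_unit_nbhd sq_adj 5
proof
  fix u v :: vertex
  show "sq_adj u v \<Longrightarrow> sq_adj v u"
    unfolding sq_adj_def by auto
  show "sq_adj u v \<Longrightarrow> \<bar>fst u - fst v\<bar> \<le> 1 \<and> \<bar>snd u - snd v\<bar> \<le> 1"
    unfolding sq_adj_def by auto
  show "finite (closed_nbhd sq_adj u)" "card (closed_nbhd sq_adj u) = 5"
    by (cases u; simp add: closed_nbhd_sq)+
qed

lemma bij_residue_sq: "bij_betw (\<lambda>x. (fst x + 2 * snd x) mod 5) (closed_nbhd sq_adj u) {0..<5}"
  by (cases u) (rule bij_betw_mod_if_diameter_lt; auto simp: closed_nbhd_sq inj_on_def)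

lemma sq_residue_code:
  "local_LD_code sq_adj (residue_code 5) \<and> density (residue_code 5) = ereal (1/5)"
proof -
  note perfect = residue_class_perfect_code[OF bij_residue_sq zero_less_numeral, folded residue_code_def]
  have "local_LD_code sq_adj (residue_code 5)"
    using triangle_free_if_unit_steps[OF sq_adj_unit_step] perfect(1)
    by (rule local_LD_code_if_covering_triangle_free)
  moreover have "density (residue_code 5) = ereal (1/5)"
    using sq.density_perfect[OF perfect] by simp
  ultimately show ?thesis ..
qed

section \<open>The hexagonal grid\<close>

lemma hex_adj_iff:
  "hex_adj (a, b) (c, d) \<longleftrightarrow>
     (d = b \<and> (c = a - 1 \<or> c = a + 1)) \<or> (c = a \<and> d = (if even (a + b) then b + 1 else b - 1))"
  unfolding hex_adj_def by (auto split: if_splits)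

lemma closed_nbhd_hex:
  "closed_nbhd hex_adj (a, b) =
     {(a, b), (a + 1, b), (a - 1, b), (a, if even (a + b) then b + 1 else b - 1)}"
  unfolding closed_nbhd_def by (auto simp: hex_adj_iff)

lemma hex_adj_unit_step: "hex_adj u v \<Longrightarrow> \<bar>fst u - fst v\<bar> + \<bar>snd u - snd v\<bar> = 1"
  unfolding hex_adj_def by (auto split: if_splits)

interpretation hex: regular_unit_nbhd hex_adj 4
proof
  fix u v :: vertex
  show "hex_adj u v \<Longrightarrow> hex_adj v u"
    by (cases u, cases v) (auto simp: hex_adj_iff even_add split: if_splits)
  show "hex_adj u v \<Longrightarrow> \<bar>fst u - fst v\<bar> \<le> 1 \<and> \<bar>snd u - snd v\<bar> \<le> 1"
    unfolding hex_adj_def by (auto split: if_splits)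
  show "finite (closed_nbhd hex_adj u)" "card (closed_nbhd hex_adj u) = 4"
    by (cases u; simp add: closed_nbhd_hex)+
qed

lemma bij_residue_hex: "bij_betw (\<lambda>x. (fst x + 2 * snd x) mod 4) (closed_nbhd hex_adj u) {0..<4}"
  by (cases u) (rule bij_betw_mod_if_diameter_lt; auto simp: closed_nbhd_hex inj_on_def split: if_splits)

lemma hex_residue_code:
  "local_LD_code hex_adj (residue_code 4) \<and> density (residue_code 4) = ereal (1/4)"
proof -
  note perfect = residue_class_perfect_code[OF bij_residue_hex zero_less_numeral, folded residue_code_def]
  have "local_LD_code hex_adj (residue_code 4)"
    using triangle_free_if_unit_steps[OF hex_adj_unit_step] perfect(1)
    by (rule local_LD_code_if_covering_triangle_free)
  moreover have "density (residue_code 4) = ereal (1/4)"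
    using hex.density_perfect[OF perfect] by simp
  ultimately show ?thesis ..
qed

theorem mainTheorem12:
  shows "gamma_LLD sq_adj = ereal (1/5) \<and> gamma_LLD hex_adj = ereal (1/4)
    \<and> (\<forall>C. local_LD_code sq_adj C \<longrightarrow> density C \<ge> ereal (1/5))
    \<and> (\<exists>C. local_LD_code sq_adj C \<and> density C = ereal (1/5))
    \<and> (\<forall>C. local_LD_code hex_adj C \<longrightarrow> density C \<ge> ereal (1/4))
    \<and> (\<exists>C. local_LD_code hex_adj C \<and> density C = ereal (1/4))"
proof -
  have sq_lower: "ereal (1/5) \<le> density C" if "local_LD_code sq_adj C" for C
    using sq.density_ge_covering that by (simp add: local_LD_code_def)
  have hex_lower: "ereal (1/4) \<le> density C" if "local_LD_code hex_adj C" for C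
    using hex.density_ge_covering that by (simp add: local_LD_code_def)
  have "gamma_LLD sq_adj = ereal (1/5)"
    using gamma_LLD_eqI sq_lower sq_residue_code by blast
  moreover have "gamma_LLD hex_adj = ereal (1/4)"
    using gamma_LLD_eqI hex_lower hex_residue_code by blast
  ultimately show ?thesis
    using sq_lower hex_lower sq_residue_code hex_residue_code by blast
qed

end
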